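(* If $v_{j1}^2+v_{j2}^2\neq0$ for $j=1$ or for $j=2$, then none of the points $[1,1,\sqrt{-1}]$, $[1,1,-\sqrt{-1}]$, $[1,-1,\sqrt{-1}]$, $[1,-1,-\sqrt{-1}]$ is a singular point of $V(\mathbf v,d)$.
   Context: Parameters $[\mathbf v,d]=[v_{11},v_{12},v_{21},v_{22},d]\in\mathbb{C}P^4$ (complex, not all zero). On $\mathbb{C}P^2$ with coordinates $[u_0,u_1,u_2]$, $V(\mathbf v,d)$ is the plane quartic $P=0$ where $P=2v_{22}u_0u_2(u_1^2+u_2^2)-2v_{12}u_1u_2(u_0^2+u_2^2)+v_{21}(u_2^2-u_0^2)(u_2^2+u_1^2)-v_{11}(u_2^2-u_1^2)(u_0^2+u_2^2)-d(u_1^2+u_2^2)(u_0^2+u_2^2)$. A point of $V$ is singular if all partial derivatives of $P$ vanish there. *)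

theory Defs
  imports "HOL-Analysis.Analysis"
begin

definition Pq :: "complex \<Rightarrow> complex \<Rightarrow> complex \<Rightarrow> complex \<Rightarrow> complex \<Rightarrow>
                  complex \<Rightarrow> complex \<Rightarrow> complex \<Rightarrow> complex" where
  "Pq v11 v12 v21 v22 d u0 u1 u2 =
     2 * v22 * u0 * u2 * (u1^2 + u2^2)
   - 2 * v12 * u1 * u2 * (u0^2 + u2^2)
   + v21 * (u2^2 - u0^2) * (u2^2 + u1^2)
   - v11 * (u2^2 - u1^2) * (u0^2 + u2^2)
   - d * (u1^2 + u2^2) * (u0^2 + u2^2)"

definition singular_pt :: "complex \<Rightarrow> complex \<Rightarrow> complex \<Rightarrow> complex \<Rightarrow> complex \<Rightarrow>
                  complex \<Rightarrow> complex \<Rightarrow> complex \<Rightarrow> bool" where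
  "singular_pt v11 v12 v21 v22 d u0 u1 u2 \<longleftrightarrow>
     Pq v11 v12 v21 v22 d u0 u1 u2 = 0 \<and>
     deriv (\<lambda>t. Pq v11 v12 v21 v22 d t u1 u2) u0 = 0 \<and>
     deriv (\<lambda>t. Pq v11 v12 v21 v22 d u0 t u2) u1 = 0 \<and>
     deriv (\<lambda>t. Pq v11 v12 v21 v22 d u0 u1 t) u2 = 0"

end

theory Submission
  imports Defs
begin

text \<open>At each of the four points [u0, u1, u2] with u1^2 = u0^2 and u2^2 = -u0^2 both factors
  u0^2 + u2^2 and u1^2 + u2^2 vanish, so the partial derivatives of P in u0 and u1 collapse to
  4 u0 (v11 u0^2 - v12 u1 u2) and 4 u0 u1 (v22 u2 - v21 u0). If both vanish, then
  v11 u0^2 = v12 u1 u2 and v21 u0 = v22 u2; squaring gives v11^2 + v12^2 = 0 and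
  v21^2 + v22^2 = 0, contradicting the hypothesis.\<close>

lemma deriv_Pq_u0:
  "deriv (\<lambda>t. Pq v11 v12 v21 v22 d t u1 u2) u0 =
     2 * v22 * u2 * (u1^2 + u2^2) - 4 * v12 * u1 * u2 * u0 - 2 * v21 * u0 * (u1^2 + u2^2)
   - 2 * v11 * (u2^2 - u1^2) * u0 - 2 * d * u0 * (u1^2 + u2^2)"
  unfolding Pq_def
  by (rule DERIV_imp_deriv, (rule derivative_eq_intros refl)+)
     (simp add: algebra_simps power2_eq_square)

lemma deriv_Pq_u1:
  "deriv (\<lambda>t. Pq v11 v12 v21 v22 d u0 t u2) u1 =
     4 * v22 * u0 * u2 * u1 - 2 * v12 * u2 * (u0^2 + u2^2) + 2 * v21 * (u2^2 - u0^2) * u1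
   + 2 * v11 * u1 * (u0^2 + u2^2) - 2 * d * u1 * (u0^2 + u2^2)"
  unfolding Pq_def
  by (rule DERIV_imp_deriv, (rule derivative_eq_intros refl)+)
     (simp add: algebra_simps power2_eq_square)

lemma singular_pt_imp_isotropic_coeffs:
  fixes u0 u1 u2 :: complex
  assumes "u0 \<noteq> 0" and u1: "u1^2 = u0^2" and u2: "u2^2 = - (u0^2)"
    and "singular_pt v11 v12 v21 v22 d u0 u1 u2"
  shows "v11^2 + v12^2 = 0 \<and> v21^2 + v22^2 = 0"
proof -
  have "u1 \<noteq> 0"
    using assms(1) u1 by auto
  have "4 * u0 * (v11 * u0^2 - v12 * u1 * u2) = deriv (\<lambda>t. Pq v11 v12 v21 v22 d t u1 u2) u0"
    unfolding deriv_Pq_u0 using u1 u2 by (simp add: algebra_simps power2_eq_square)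
  also have "\<dots> = 0"
    using assms(4) by (simp add: singular_pt_def)
  finally have v1_relation: "v11 * u0^2 = v12 * u1 * u2"
    using assms(1) by simp
  have "4 * u0 * u1 * (v22 * u2 - v21 * u0) = deriv (\<lambda>t. Pq v11 v12 v21 v22 d u0 t u2) u1"
    unfolding deriv_Pq_u1 using u1 u2 by (simp add: algebra_simps power2_eq_square)
  also have "\<dots> = 0"
    using assms(4) by (simp add: singular_pt_def)
  finally have v2_relation: "v21 * u0 = v22 * u2"
    using assms(1) \<open>u1 \<noteq> 0\<close> by simp
  have "(v11^2 + v12^2) * u0^4 = (v11 * u0^2)^2 + v12^2 * u0^4"
    by algebra
  also have "\<dots> = 0"
    unfolding v1_relation using u1 u2 by (simp add: power_mult_distrib flip: power2_eq_square)
  finally have isotropic_v1: "v11^2 + v12^2 = 0"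
    using assms(1) by simp
  have "(v21^2 + v22^2) * u0^2 = (v21 * u0)^2 + v22^2 * u0^2"
    by algebra
  also have "\<dots> = 0"
    unfolding v2_relation using u2 by (simp add: power_mult_distrib)
  finally have "v21^2 + v22^2 = 0"
    using assms(1) by simp
  with isotropic_v1 show ?thesis ..
qed

theorem lemma6p6:
  fixes v11 v12 v21 v22 d :: complex
  assumes "(v11, v12, v21, v22, d) \<noteq> (0, 0, 0, 0, 0)"
    and "v11^2 + v12^2 \<noteq> 0 \<or> v21^2 + v22^2 \<noteq> 0"
  shows "\<not> singular_pt v11 v12 v21 v22 d 1 1 \<i> \<and>
         \<not> singular_pt v11 v12 v21 v22 d 1 1 (- \<i>) \<and>
         \<not> singular_pt v11 v12 v21 v22 d 1 (-1) \<i> \<and>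
         \<not> singular_pt v11 v12 v21 v22 d 1 (-1) (- \<i>)"
  using assms(2)
    singular_pt_imp_isotropic_coeffs[of 1 1 \<i>] singular_pt_imp_isotropic_coeffs[of 1 1 "- \<i>"]
    singular_pt_imp_isotropic_coeffs[of 1 "-1" \<i>] singular_pt_imp_isotropic_coeffs[of 1 "-1" "- \<i>"]
  by auto

end
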